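(* Let $\pi$ be an $R[G_n]$-module and $1\le k\le n$. Then $(\pi^{(k,\psi_R)})^\vee\cong(\pi^\vee)^{(k,\psi_R^{-1})}$.
   Context: Let $p$ be a prime, $q$ a power of $p$, $G_n=\mathrm{GL}_n(\mathbb{F}_q)$, $R$ a commutative Noetherian $\mathbb{Z}[\frac1p,\zeta_p]$-algebra, $\psi:(\mathbb{F}_q,+)\to\mathbb{Z}[\frac1p,\zeta_p]^\times$ nontrivial, $\psi_R$ its image in $R^\times$. $(-)^\vee$ is the $R$-linear dual with contragredient action. For a character $\chi\in\{\psi_R,\psi_R^{-1}\}$: $P_n$ is the mirabolic subgroup (last row $(0,\dots,0,1)$), $U_n=\{\begin{psmallmatrix}I_{n-1}&y\\0&1\end{psmallmatrix}\}$ with character $\chi(y_{n-1})$; for an $R[P_n]$-module $V$, $\Phi^-_\chi(V)=V/\langle uv-\chi(u)v:u\in U_n\rangle$ (an $R[P_{n-1}]$-module) and $\Psi^-(V)=V/\langle uv-v:u\in U_n\rangle$ (an $R[G_{n-1}]$-module); $\pi^{(k,\chi)}=\Psi^-(\Phi^-_\chi)^{k-1}(\pi|_{P_n})$, an $R[G_{n-k}]$-module. *)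

theory Defs
  imports Complex_Main "HOL-Library.Function_Algebras" "Jordan_Normal_Form.Matrix"
begin

definition is_ideal :: "'r::comm_ring_1 set \<Rightarrow> bool" where
  "is_ideal I \<longleftrightarrow> 0 \<in> I \<and> (\<forall>x\<in>I. \<forall>y\<in>I. x + y \<in> I) \<and> (\<forall>r. \<forall>x\<in>I. r * x \<in> I)"

definition noetherian_ring :: "'r::comm_ring_1 itself \<Rightarrow> bool" where
  "noetherian_ring _ \<longleftrightarrow>
     (\<forall>I::'r set. is_ideal I \<longrightarrow>
        (\<exists>F. finite F \<and> F \<subseteq> I \<and> I = {\<Sum>x\<in>F. c x * x | c. True}))"

text \<open>The ring Z[1/p, zeta_p], realised as the subring of the complex numbers
  generated by 1/p and zeta_p = exp(2 pi i / p).\<close>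
inductive_set Zpz :: "nat \<Rightarrow> complex set" for p :: nat where
  one: "1 \<in> Zpz p"
| zeta: "cis (2 * pi / real p) \<in> Zpz p"
| invp: "1 / of_nat p \<in> Zpz p"
| neg: "x \<in> Zpz p \<Longrightarrow> - x \<in> Zpz p"
| add: "x \<in> Zpz p \<Longrightarrow> y \<in> Zpz p \<Longrightarrow> x + y \<in> Zpz p"
| mult: "x \<in> Zpz p \<Longrightarrow> y \<in> Zpz p \<Longrightarrow> x * y \<in> Zpz p"

text \<open>A ring homomorphism Z[1/p,zeta_p] -> R (the algebra structure map).\<close>
definition Zpz_alg_hom :: "nat \<Rightarrow> (complex \<Rightarrow> 'r::comm_ring_1) \<Rightarrow> bool" where
  "Zpz_alg_hom p \<phi> \<longleftrightarrow> \<phi> 1 = 1 \<and>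
     (\<forall>x\<in>Zpz p. \<forall>y\<in>Zpz p. \<phi> (x + y) = \<phi> x + \<phi> y \<and> \<phi> (x * y) = \<phi> x * \<phi> y)"

definition nontriv_add_char :: "nat \<Rightarrow> ('f::{field,finite} \<Rightarrow> complex) \<Rightarrow> bool" where
  "nontriv_add_char p \<psi> \<longleftrightarrow>
     (\<forall>x. \<psi> x \<in> Zpz p \<and> (\<exists>y\<in>Zpz p. \<psi> x * y = 1)) \<and>
     (\<forall>x y. \<psi> (x + y) = \<psi> x * \<psi> y) \<and> (\<exists>x. \<psi> x \<noteq> 1)"

definition GL :: "nat \<Rightarrow> 'f::field mat set" where
  "GL n = {A \<in> carrier_mat n n. invertible_mat A}"

definition ginv :: "nat \<Rightarrow> 'f::field mat \<Rightarrow> 'f mat" where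
  "ginv n g = (SOME h. h \<in> carrier_mat n n \<and> h * g = 1\<^sub>m n)"

definition emb :: "nat \<Rightarrow> 'f::field mat \<Rightarrow> 'f mat" where
  "emb n g = mat n n (\<lambda>(i,j). if i < dim_row g \<and> j < dim_row g then g $$ (i,j)
                               else if i = j then 1 else 0)"

text \<open>U_m (inside P_m inside G_m inside G_n): identity matrices except for the
  entries of column m-1 (0-indexed) above the diagonal.\<close>
definition Umat :: "nat \<Rightarrow> nat \<Rightarrow> 'f::field mat set" where
  "Umat n m = {u \<in> carrier_mat n n. \<forall>i<n. \<forall>j<n.
       (i = j \<longrightarrow> u $$ (i,j) = 1) \<and>
       (i \<noteq> j \<and> \<not> (j = m - 1 \<and> i < m - 1) \<longrightarrow> u $$ (i,j) = 0)}"

definition is_rep :: "nat \<Rightarrow> ('r::comm_ring_1 \<Rightarrow> 'v::ab_group_add \<Rightarrow> 'v)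
                     \<Rightarrow> ('f::field mat \<Rightarrow> 'v \<Rightarrow> 'v) \<Rightarrow> bool" where
  "is_rep n s act \<longleftrightarrow> Modules.module s \<and>
     (\<forall>g\<in>GL n. \<forall>x y. act g (x + y) = act g x + act g y) \<and>
     (\<forall>g\<in>GL n. \<forall>c x. act g (s c x) = s c (act g x)) \<and>
     (\<forall>x. act (1\<^sub>m n) x = x) \<and>
     (\<forall>g\<in>GL n. \<forall>h\<in>GL n. \<forall>x. act (g * h) x = act g (act h x))"

text \<open>Relations for Phi^-_chi at level m (module presented with carrier V inside an
  ambient module s, the G_n-action act restricted to U_m).\<close>
definition rels :: "('r::comm_ring_1 \<Rightarrow> 'a::ab_group_add \<Rightarrow> 'a) \<Rightarrow> ('f::field mat \<Rightarrow> 'a \<Rightarrow> 'a)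
                   \<Rightarrow> 'a set \<Rightarrow> nat \<Rightarrow> nat \<Rightarrow> ('f \<Rightarrow> 'r) \<Rightarrow> 'a set" where
  "rels s act V n m \<chi> =
     {act u v - s (\<chi> (u $$ (m - 2, m - 1))) v | u v. u \<in> Umat n m \<and> v \<in> V}"

text \<open>Relations for Psi^- at level m (trivial character).\<close>
definition relsT :: "('f::field mat \<Rightarrow> 'a::ab_group_add \<Rightarrow> 'a) \<Rightarrow> 'a set \<Rightarrow> nat \<Rightarrow> nat \<Rightarrow> 'a set" where
  "relsT act V n m = {act u v - v | u v. u \<in> Umat n m \<and> v \<in> V}"

text \<open>Kernel of V -> (Phi^-_chi)^j (V|_{P_n}); a quotient of a quotient is a quotient.\<close>
fun phiW :: "('r::comm_ring_1 \<Rightarrow> 'a::ab_group_add \<Rightarrow> 'a) \<Rightarrow> ('f::field mat \<Rightarrow> 'a \<Rightarrow> 'a)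
              \<Rightarrow> 'a set \<Rightarrow> nat \<Rightarrow> ('f \<Rightarrow> 'r) \<Rightarrow> nat \<Rightarrow> 'a set" where
  "phiW s act V n \<chi> 0 = Modules.module.span s {}"
| "phiW s act V n \<chi> (Suc j) = Modules.module.span s (phiW s act V n \<chi> j \<union> rels s act V n (n - j) \<chi>)"

text \<open>Kernel of V -> V^{(k,chi)} = Psi^- (Phi^-_chi)^{k-1} (V|_{P_n}).
  The derivative is V / derivW, with G_{n-k} acting through emb n.\<close>
definition derivW :: "('r::comm_ring_1 \<Rightarrow> 'a::ab_group_add \<Rightarrow> 'a) \<Rightarrow> ('f::field mat \<Rightarrow> 'a \<Rightarrow> 'a)
              \<Rightarrow> 'a set \<Rightarrow> nat \<Rightarrow> nat \<Rightarrow> ('f \<Rightarrow> 'r) \<Rightarrow> 'a set" where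
  "derivW s act V n k \<chi> =
     Modules.module.span s (phiW s act V n \<chi> (k - 1) \<union> relsT act V n (n - k + 1))"

text \<open>Isomorphism of G-modules V1/W1 and V2/W2 (presented as quotients), given by a
  lift f : V1 -> V2 of the isomorphism.\<close>
definition quot_iso :: "('r \<Rightarrow> 'a::ab_group_add \<Rightarrow> 'a) \<Rightarrow> ('g \<Rightarrow> 'a \<Rightarrow> 'a) \<Rightarrow> 'a set \<Rightarrow> 'a set
                      \<Rightarrow> ('r \<Rightarrow> 'b::ab_group_add \<Rightarrow> 'b) \<Rightarrow> ('g \<Rightarrow> 'b \<Rightarrow> 'b) \<Rightarrow> 'b set \<Rightarrow> 'b set
                      \<Rightarrow> 'g set \<Rightarrow> bool" where
  "quot_iso s1 act1 V1 W1 s2 act2 V2 W2 G \<longleftrightarrow>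
    (\<exists>f. (\<forall>x\<in>V1. f x \<in> V2) \<and>
         (\<forall>x\<in>V1. \<forall>y\<in>V1. f (x + y) - (f x + f y) \<in> W2) \<and>
         (\<forall>c. \<forall>x\<in>V1. f (s1 c x) - s2 c (f x) \<in> W2) \<and>
         (\<forall>x\<in>V1. x \<in> W1 \<longleftrightarrow> f x \<in> W2) \<and>
         (\<forall>y\<in>V2. \<exists>x\<in>V1. y - f x \<in> W2) \<and>
         (\<forall>g\<in>G. \<forall>x\<in>V1. f (act1 g x) - act2 g (f x) \<in> W2))"

definition dscale :: "'r::comm_ring_1 \<Rightarrow> ('v \<Rightarrow> 'r) \<Rightarrow> ('v \<Rightarrow> 'r)" where
  "dscale c f = (\<lambda>v. c * f v)"

definition dual_space :: "('r::comm_ring_1 \<Rightarrow> 'v::ab_group_add \<Rightarrow> 'v) \<Rightarrow> ('v \<Rightarrow> 'r) set" where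
  "dual_space s = {f. Modules.module_hom s ((*)) f}"

definition dual_act :: "nat \<Rightarrow> ('f::field mat \<Rightarrow> 'v \<Rightarrow> 'v) \<Rightarrow> 'f mat \<Rightarrow> ('v \<Rightarrow> 'r) \<Rightarrow> ('v \<Rightarrow> 'r)" where
  "dual_act n act g f = (\<lambda>v. f (act (ginv n g) v))"

text \<open>Dual of the derivative pi^{(k,chi)} = V / derivW: functionals vanishing on derivW,
  with the contragredient action of G_{n-k}.\<close>
definition deriv_dual_space :: "('r::comm_ring_1 \<Rightarrow> 'v::ab_group_add \<Rightarrow> 'v) \<Rightarrow> ('f::field mat \<Rightarrow> 'v \<Rightarrow> 'v)
      \<Rightarrow> nat \<Rightarrow> nat \<Rightarrow> ('f \<Rightarrow> 'r) \<Rightarrow> ('v \<Rightarrow> 'r) set" where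
  "deriv_dual_space s act n k \<chi> =
     {f \<in> dual_space s. \<forall>w\<in>derivW s act UNIV n k \<chi>. f w = 0}"

definition deriv_dual_act :: "nat \<Rightarrow> nat \<Rightarrow> ('f::field mat \<Rightarrow> 'v \<Rightarrow> 'v) \<Rightarrow> 'f mat \<Rightarrow> ('v \<Rightarrow> 'r) \<Rightarrow> ('v \<Rightarrow> 'r)" where
  "deriv_dual_act n k act g f = (\<lambda>v. f (act (emb n (ginv (n - k) g)) v))"

end

(* The dual of a quotient V / W is the annihilator of W in the dual.  Here W is spanned by the
   relations u v - chi(u) v of the unipotent groups U_n, ..., U_(n-k+2) (with chi = psi) and
   U_(n-k+1) (with chi trivial).  Since |U_m| = q^(m-1) is a power of p and 1/p lies in R, each
   U_m has an averaging operator A_m = |U_m|^(-1) sum_u chi(u)^(-1) u, and the A_m for distinct m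
   commute, because conjugation by a lower U_m' permutes U_m and preserves chi.  Their product E
   is a projection with kernel W, while g |-> g o E is a projection of the dual whose kernel is
   spanned by the contragredient relations for psi^(-1).  Hence the annihilator of W meets that
   kernel trivially and represents every class of the dual modulo it, so the identity induces the
   isomorphism. *)

theory Submission
  imports Defs "HOL-Algebra.Sylow" "HOL-Algebra.Multiplicative_Group" "HOL-Library.FuncSet"
begin

section \<open>Finite fields\<close>

definition additive_group :: "'a::ring_1 set \<Rightarrow> 'a monoid" where
  "additive_group S = \<lparr>carrier = S, monoid.mult = (+), one = 0\<rparr>"

lemma additive_group_simps [simp]:
  "carrier (additive_group S) = S" "\<one>\<^bsub>additive_group S\<^esub> = 0"
  "x \<otimes>\<^bsub>additive_group S\<^esub> y = x + y" "(additive_group S)\<lparr>carrier := T\<rparr> = additive_group T"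
  by (simp_all add: additive_group_def)

lemma additive_group_pow: "x [^]\<^bsub>additive_group S\<^esub> (j::nat) = of_nat j * x"
  by (induct j) (simp_all add: algebra_simps)

lemma group_additive_group: "group (additive_group (UNIV :: 'a::ring_1 set))"
proof (rule groupI)
  show "\<exists>y\<in>carrier (additive_group UNIV). y \<otimes>\<^bsub>additive_group UNIV\<^esub> x = \<one>\<^bsub>additive_group UNIV\<^esub>"
    for x :: 'a
    by (intro bexI[of _ "- x"]) simp_all
qed (simp_all add: add.assoc)

lemma prime_CHAR_finite_field: "finite (UNIV :: 'f::field set) \<Longrightarrow> prime CHAR('f)"
  by (intro prime_CHAR_semidom finite_imp_CHAR_pos)

text \<open>Cauchy's theorem (via Sylow) in the additive group, whose nonzero elements have order
  CHAR.\<close>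
lemma prime_dvd_card_finite_field:
  fixes r :: nat
  assumes r: "prime r" "r dvd card (UNIV :: 'f::{field,finite} set)"
  shows "r = CHAR('f)"
proof (rule ccontr)
  assume ne: "r \<noteq> CHAR('f)"
  interpret G: group "additive_group (UNIV :: 'f set)" by (rule group_additive_group)
  obtain m where m: "card (UNIV :: 'f set) = r * m" using r(2) by blast
  have "sylow (additive_group (UNIV :: 'f set)) r 1 m"
    unfolding sylow_eq sylow_axioms_def using r m G.group_axioms by (auto simp: order_def)
  from sylow.sylow_thm[OF this] obtain H where H: "subgroup H (additive_group (UNIV :: 'f set))" "card H = r"
    by auto
  interpret H: group "additive_group H"
    using G.subgroup_imp_group[OF H(1)] by simp
  have r_nonzero: "(of_nat r :: 'f) \<noteq> 0"
    using ne r(1) prime_CHAR_finite_field[where 'f='f]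
    by (metis finite_UNIV of_nat_eq_0_iff_char_dvd primes_dvd_imp_eq)
  have "H \<subseteq> {0}"
  proof
    fix x assume "x \<in> H"
    then have "of_nat r * x = 0"
      using H.pow_order_eq_1[of x] H(2) by (simp add: additive_group_pow order_def)
    then show "x \<in> {0}" using r_nonzero by simp
  qed
  then have "card H \<le> 1" using card_mono[of "{0::'f}" H] by simp
  then show False using H(2) r(1) prime_gt_1_nat[of r] by simp
qed

lemma card_finite_field_eq_CHAR_power: "\<exists>d. card (UNIV :: 'f::{field,finite} set) = CHAR('f) ^ d"
proof -
  have "prime CHAR('f)" by (rule prime_CHAR_finite_field) simp
  then have "\<not> is_unit CHAR('f)" using not_prime_unit by blast
  then obtain y where y: "card (UNIV :: 'f set) = CHAR('f) ^ multiplicity CHAR('f) (card (UNIV :: 'f set)) * y"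
    and not_dvd: "\<not> CHAR('f) dvd y"
    using multiplicity_decompose'[of "card (UNIV :: 'f set)" "CHAR('f)"] by auto
  have "y = 1"
  proof (rule ccontr)
    assume "y \<noteq> 1"
    then obtain r where r: "prime r" "r dvd y" using prime_factor_nat by blast
    have "y dvd card (UNIV :: 'f set)" by (subst y) simp
    then have "r = CHAR('f)" using r by (intro prime_dvd_card_finite_field) (auto intro: dvd_trans)
    then show False using r(2) not_dvd by simp
  qed
  then show ?thesis using y by (metis mult_1_right)
qed

section \<open>The unipotent groups U_m\<close>

definition col_mat :: "nat \<Rightarrow> nat \<Rightarrow> (nat \<Rightarrow> 'a::zero) \<Rightarrow> 'a mat" where
  "col_mat n c a = mat n n (\<lambda>(i, j). if j = c then a i else 0)"

lemma col_mat_carrier [simp]: "col_mat n c a \<in> carrier_mat n n"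
  and dim_col_mat [simp]: "dim_row (col_mat n c a) = n" "dim_col (col_mat n c a) = n"
  and index_col_mat [simp]:
    "i < n \<Longrightarrow> j < n \<Longrightarrow> col_mat n c a $$ (i, j) = (if j = c then a i else 0)"
  by (auto simp: col_mat_def)

lemma col_mat_mult:
  fixes a b :: "nat \<Rightarrow> 'a::semiring_0"
  assumes "c < n"
  shows "col_mat n c a * col_mat n c' b = col_mat n c' (\<lambda>i. a i * b c)"
proof (rule eq_matI)
  fix i j assume ij: "i < dim_row (col_mat n c' (\<lambda>i. a i * b c))" "j < dim_col (col_mat n c' (\<lambda>i. a i * b c))"
  then have "(col_mat n c a * col_mat n c' b) $$ (i, j) =
      (\<Sum>l\<in>{0..<n}. (if l = c then a i else 0) * (if j = c' then b l else 0))"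
    by (simp add: scalar_prod_def)
  also have "\<dots> = (\<Sum>l\<in>{0..<n}. if l = c then a i * (if j = c' then b c else 0) else 0)"
    by (rule sum.cong) auto
  also have "\<dots> = col_mat n c' (\<lambda>i. a i * b c) $$ (i, j)" using assms ij by simp
  finally show "(col_mat n c a * col_mat n c' b) $$ (i, j) = col_mat n c' (\<lambda>i. a i * b c) $$ (i, j)" .
qed auto

lemma col_mat_zero: "col_mat n c (\<lambda>_. 0) = 0\<^sub>m n n"
  by (rule eq_matI) auto

lemma one_add_mult_one_add_mat:
  fixes X Y :: "'a::semiring_1 mat"
  assumes "X \<in> carrier_mat n n" "Y \<in> carrier_mat n n"
  shows "(1\<^sub>m n + X) * (1\<^sub>m n + Y) = 1\<^sub>m n + X + Y + X * Y"
proof -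
  have "(1\<^sub>m n + X) * (1\<^sub>m n + Y) = (1\<^sub>m n + X) * 1\<^sub>m n + (1\<^sub>m n + X) * Y"
    using assms by (intro mult_add_distrib_mat) auto
  also have "(1\<^sub>m n + X) * Y = 1\<^sub>m n * Y + X * Y"
    using assms by (intro add_mult_distrib_mat) auto
  also have "(1\<^sub>m n + X) * 1\<^sub>m n = 1\<^sub>m n + X" using assms by simp
  also have "1\<^sub>m n * Y = Y" using assms by simp
  finally show ?thesis using assms by (intro eq_matI) (auto simp: ac_simps)
qed

definition Umat_elem :: "nat \<Rightarrow> nat \<Rightarrow> (nat \<Rightarrow> 'f::field) \<Rightarrow> 'f mat" where
  "Umat_elem n m a = 1\<^sub>m n + col_mat n (m - 1) (\<lambda>i. if i < m - 1 then a i else 0)"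

lemma Umat_elem_carrier [simp]: "Umat_elem n m a \<in> carrier_mat n n"
  and dim_Umat_elem [simp]: "dim_row (Umat_elem n m a) = n" "dim_col (Umat_elem n m a) = n"
  by (auto simp: Umat_elem_def)

lemma index_Umat_elem: "i < n \<Longrightarrow> j < n \<Longrightarrow>
    Umat_elem n m a $$ (i, j) = (if i = j then 1 else if j = m - 1 \<and> i < m - 1 then a i else 0)"
  by (auto simp: Umat_elem_def)

lemma Umat_elem_cong: "(\<And>i. i < m - 1 \<Longrightarrow> a i = b i) \<Longrightarrow> Umat_elem n m a = Umat_elem n m b"
  unfolding Umat_elem_def by (metis (mono_tags, lifting))

lemma Umat_elem_in_Umat: "Umat_elem n m a \<in> Umat n m"
  by (auto simp: Umat_def index_Umat_elem)

lemma Umat_eq_Umat_elem: "u \<in> Umat n m \<Longrightarrow> u = Umat_elem n m (\<lambda>i. u $$ (i, m - 1))"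
  by (intro eq_matI) (auto simp: Umat_def index_Umat_elem)

lemma Umat_elem_mult:
  assumes "1 \<le> m" "m \<le> n"
  shows "Umat_elem n m a * Umat_elem n m b = Umat_elem n m (\<lambda>i. a i + b i)"
proof -
  have "col_mat n (m - 1) (\<lambda>i. if i < m - 1 then a i else 0) *
        col_mat n (m - 1) (\<lambda>i. if i < m - 1 then b i else 0) = 0\<^sub>m n n"
    using assms by (simp add: col_mat_mult col_mat_zero)
  then show ?thesis
    unfolding Umat_elem_def by (subst one_add_mult_one_add_mat) (auto intro!: eq_matI)
qed

lemma Umat_elem_zero: "Umat_elem n m (\<lambda>_. 0) = 1\<^sub>m n"
  by (simp add: Umat_elem_def col_mat_zero)

lemma Umat_elem_mult_neg:
  "1 \<le> m \<Longrightarrow> m \<le> n \<Longrightarrow> Umat_elem n m a * Umat_elem n m (\<lambda>i. - a i) = 1\<^sub>m n"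
  by (simp add: Umat_elem_mult Umat_elem_zero)

text \<open>Conjugating U_m by a lower U_m' acts on the parameters by a shear.\<close>
lemma Umat_elem_conj:
  assumes "1 \<le> m'" "m' < m" "m \<le> n"
  shows "Umat_elem n m' c * Umat_elem n m a =
     Umat_elem n m (\<lambda>i. a i + (if i < m' - 1 then c i * a (m' - 1) else 0)) * Umat_elem n m' c"
proof -
  define C where "C = col_mat n (m' - 1) (\<lambda>i. if i < m' - 1 then c i else 0)"
  define A where "A = col_mat n (m - 1) (\<lambda>i. if i < m - 1 then a i else 0)"
  define A' where "A' = col_mat n (m - 1)
    (\<lambda>i. if i < m - 1 then a i + (if i < m' - 1 then c i * a (m' - 1) else 0) else 0)"
  have "C * A = col_mat n (m - 1) (\<lambda>i. (if i < m' - 1 then c i else 0) * a (m' - 1))"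
    unfolding C_def A_def using assms by (simp add: col_mat_mult)
  moreover have "A' * C = 0\<^sub>m n n"
    unfolding C_def A'_def using assms by (simp add: col_mat_mult col_mat_zero)
  ultimately have "1\<^sub>m n + C + A + C * A = 1\<^sub>m n + A' + C + A' * C"
    using assms by (intro eq_matI) (auto simp: A_def A'_def C_def)
  moreover have "Umat_elem n m' c * Umat_elem n m a = 1\<^sub>m n + C + A + C * A"
    unfolding Umat_elem_def C_def A_def by (rule one_add_mult_one_add_mat) auto
  moreover have "Umat_elem n m (\<lambda>i. a i + (if i < m' - 1 then c i * a (m' - 1) else 0)) * Umat_elem n m' c
      = 1\<^sub>m n + A' + C + A' * C"
    unfolding Umat_elem_def C_def A'_def by (rule one_add_mult_one_add_mat) auto
  ultimately show ?thesis by simp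
qed

lemma ginv_eqI:
  fixes g h :: "'f::field mat"
  assumes "g \<in> carrier_mat n n" "h \<in> carrier_mat n n" "h * g = 1\<^sub>m n" "g * h = 1\<^sub>m n"
  shows "ginv n g = h"
  unfolding ginv_def
proof (rule some_equality)
  fix h' assume h': "h' \<in> carrier_mat n n \<and> h' * g = 1\<^sub>m n"
  have "h' = (h' * g) * h" using assms h' by (metis assoc_mult_mat right_mult_one_mat)
  then show "h' = h" using assms h' by simp
qed (use assms in auto)

lemma ginv_Umat_elem:
  "1 \<le> m \<Longrightarrow> m \<le> n \<Longrightarrow> ginv n (Umat_elem n m a) = Umat_elem n m (\<lambda>i. - a i)"
  using Umat_elem_mult_neg[of m n a] Umat_elem_mult_neg[of m n "\<lambda>i. - a i"]
  by (intro ginv_eqI) auto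

lemma Umat_elem_GL: "1 \<le> m \<Longrightarrow> m \<le> n \<Longrightarrow> Umat_elem n m a \<in> GL n"
  using Umat_elem_mult_neg[of m n a] Umat_elem_mult_neg[of m n "\<lambda>i. - a i"]
  unfolding GL_def invertible_mat_def inverts_mat_def
  by (intro CollectI conjI exI[of _ "Umat_elem n m (\<lambda>i. - a i)"]) auto

lemma emb_eq_four_block_mat:
  assumes "g \<in> carrier_mat d d" "n = d + e"
  shows "emb n g = four_block_mat g (0\<^sub>m d e) (0\<^sub>m e d) (1\<^sub>m e)"
  using assms by (intro eq_matI) (auto simp: emb_def)

lemma emb_carrier: "emb n g \<in> carrier_mat n n"
  by (simp add: emb_def)

lemma emb_mult:
  assumes "g \<in> carrier_mat d d" "h \<in> carrier_mat d d" "d \<le> n"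
  shows "emb n h * emb n g = emb n (h * g)"
proof -
  obtain e where n: "n = d + e" using assms(3) le_Suc_ex by blast
  show ?thesis
    using assms mult_four_block_mat[OF assms(2) zero_carrier_mat zero_carrier_mat one_carrier_mat
        assms(1) zero_carrier_mat zero_carrier_mat one_carrier_mat]
    by (simp add: emb_eq_four_block_mat[OF _ n])
qed

lemma emb_one: "d \<le> n \<Longrightarrow> emb n (1\<^sub>m d :: 'f::field mat) = 1\<^sub>m n"
  by (intro eq_matI) (auto simp: emb_def)

lemma GL_ginv:
  assumes "g \<in> GL d"
  shows "ginv d g \<in> carrier_mat d d" "ginv d g * g = 1\<^sub>m d" "g * ginv d g = 1\<^sub>m d"
proof -
  from assms obtain h where g: "g \<in> carrier_mat d d" "g * h = 1\<^sub>m d" "h * g = 1\<^sub>m (dim_row h)"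
    unfolding GL_def invertible_mat_def inverts_mat_def by auto
  then have "h \<in> carrier_mat d d" by (metis carrier_matD carrier_matI index_mult_mat(2,3) index_one_mat(2,3))
  then show "ginv d g \<in> carrier_mat d d" "ginv d g * g = 1\<^sub>m d" "g * ginv d g = 1\<^sub>m d"
    using g ginv_eqI[of g d h] by auto
qed

lemma ginv_emb:
  assumes "g \<in> GL d" "d \<le> n"
  shows "ginv n (emb n g) = emb n (ginv d g)"
  using assms GL_ginv[OF assms(1)] by (intro ginv_eqI) (auto simp: emb_carrier emb_mult emb_one GL_def)

definition Umat_coords :: "nat \<Rightarrow> (nat \<Rightarrow> 'f) set" where
  "Umat_coords m = PiE {..<m - 1} (\<lambda>_. UNIV)"

lemma finite_Umat_coords [simp]: "finite (Umat_coords m :: (nat \<Rightarrow> 'f::finite) set)"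
  unfolding Umat_coords_def by (intro finite_PiE) auto

lemma card_Umat_coords: "card (Umat_coords m :: (nat \<Rightarrow> 'f::finite) set) = card (UNIV :: 'f set) ^ (m - 1)"
  unfolding Umat_coords_def by (simp add: card_PiE)

lemma bij_betw_PiE_translate:
  "bij_betw (\<lambda>a. restrict (\<lambda>i. a i + b i) I)
     (PiE I (\<lambda>_. UNIV)) (PiE I (\<lambda>_. UNIV :: 'f::ab_group_add set))"
  by (rule bij_betw_byWitness[where f'="\<lambda>a. restrict (\<lambda>i. a i - b i) I"])
     (auto simp: fun_eq_iff PiE_iff extensional_def)

lemma bij_betw_PiE_shear:
  fixes c :: "'i \<Rightarrow> 'f::comm_ring_1"
  assumes "j \<in> I" "j \<notin> J"
  shows "bij_betw (\<lambda>a. restrict (\<lambda>i. a i + (if i \<in> J then c i * a j else 0)) I)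
     (PiE I (\<lambda>_. UNIV)) (PiE I (\<lambda>_. UNIV))"
  by (rule bij_betw_byWitness[where f'="\<lambda>a. restrict (\<lambda>i. a i - (if i \<in> J then c i * a j else 0)) I"])
     (use assms in \<open>auto simp: fun_eq_iff PiE_iff extensional_def\<close>)

definition additive_char :: "('f::ab_group_add \<Rightarrow> 'r::comm_ring_1) \<Rightarrow> bool" where
  "additive_char \<xi> \<longleftrightarrow> \<xi> 0 = 1 \<and> (\<forall>x y. \<xi> (x + y) = \<xi> x * \<xi> y)"

lemma additive_char_neg_mult: "additive_char \<xi> \<Longrightarrow> \<xi> (- x) * \<xi> x = 1"
  unfolding additive_char_def by (metis add.left_inverse)

text \<open>For m = 1 the group U_m is trivial and the entry (m - 2, m - 1) read off by rels is
  the diagonal entry 1, so only the trivial character gives the intended relations.\<close>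
definition admissible_level :: "nat \<Rightarrow> nat \<Rightarrow> ('f::ab_group_add \<Rightarrow> 'r::comm_ring_1) \<Rightarrow> bool" where
  "admissible_level n m \<xi> \<longleftrightarrow>
     additive_char \<xi> \<and> 1 \<le> m \<and> m \<le> n \<and> (m = 1 \<longrightarrow> (\<forall>x. \<xi> x = 1))"

lemma admissible_levelD:
  assumes "admissible_level n m \<xi>"
  shows "additive_char \<xi>" "1 \<le> m" "m \<le> n" "m = 1 \<Longrightarrow> \<xi> x = 1"
  using assms unfolding admissible_level_def by blast+

lemma additive_char_neg: "additive_char \<xi> \<Longrightarrow> additive_char (\<lambda>y. \<xi> (- y))"
  unfolding additive_char_def by (metis add.inverse_distrib_swap add.commute minus_zero)

lemma admissible_level_neg: "admissible_level n m \<xi> \<Longrightarrow> admissible_level n m (\<lambda>y. \<xi> (- y))"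
  unfolding admissible_level_def using additive_char_neg by blast

lemma char_Umat_elem_entry:
  assumes "admissible_level n m \<xi>"
  shows "\<xi> (Umat_elem n m a $$ (m - 2, m - 1)) = \<xi> (a (m - 2))"
proof (cases "m = 1")
  case False
  then have "m - 2 < m - 1" "m - 1 < n" using admissible_levelD(2,3)[OF assms] by auto
  then show ?thesis by (simp add: index_Umat_elem)
next
  case True
  then show ?thesis by (simp only: admissible_levelD(4)[OF assms True])
qed

section \<open>Projections onto coinvariants and duality\<close>

lemma module_dscale: "Modules.module (dscale :: 'r::comm_ring_1 \<Rightarrow> ('v \<Rightarrow> 'r) \<Rightarrow> ('v \<Rightarrow> 'r))"
  by unfold_locales (auto simp: dscale_def fun_eq_iff algebra_simps)

lemma dscale_apply: "dscale c f v = c * f v"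
  by (simp add: dscale_def)

lemma sum_fun_apply: "(sum f A) x = (\<Sum>a\<in>A. f a x)"
  by (induct A rule: infinite_finite_induct) auto

text \<open>E projects V onto a complement of span G, and g \<mapsto> g \<circ> E projects the dual onto a
  complement of span GD.\<close>
definition coinv_projector ::
    "('r::comm_ring_1 \<Rightarrow> 'v::ab_group_add \<Rightarrow> 'v) \<Rightarrow> ('v \<Rightarrow> 'v) \<Rightarrow> 'v set \<Rightarrow> ('v \<Rightarrow> 'r) set
      \<Rightarrow> bool" where
  "coinv_projector s E G GD \<longleftrightarrow> module_hom s s E \<and>
     (\<forall>v. v - E v \<in> Modules.module.span s G) \<and> (\<forall>w\<in>G. E w = 0) \<and>
     (\<forall>g\<in>dual_space s. g - (g \<circ> E) \<in> Modules.module.span dscale GD) \<and>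
     (\<forall>w\<in>GD. \<forall>v. w (E v) = 0)"

context Modules.module
begin

interpretation D: Modules.module "dscale :: 'a \<Rightarrow> ('b \<Rightarrow> 'a) \<Rightarrow> ('b \<Rightarrow> 'a)"
  by (rule module_dscale)

lemma coinv_projector_id: "coinv_projector scale id {} {}"
  by (simp add: coinv_projector_def module_hom_id span_zero D.span_zero fun_eq_iff)

lemma coinv_projector_comp:
  assumes E1: "coinv_projector scale E1 G1 GD1" and E2: "coinv_projector scale E2 G2 GD2"
    and comm: "\<And>v. E1 (E2 v) = E2 (E1 v)"
  shows "coinv_projector scale (E1 \<circ> E2) (G1 \<union> G2) (GD1 \<union> GD2)"
proof -
  interpret E1: module_hom scale scale E1 using E1 by (simp add: coinv_projector_def)
  interpret E2: module_hom scale scale E2 using E2 by (simp add: coinv_projector_def)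
  have "v - E1 (E2 v) \<in> span (G1 \<union> G2)" for v
  proof -
    have "v - E2 v \<in> span (G1 \<union> G2)" "E2 v - E1 (E2 v) \<in> span (G1 \<union> G2)"
      using E1 E2 span_mono[of G1 "G1 \<union> G2"] span_mono[of G2 "G1 \<union> G2"]
      by (auto simp: coinv_projector_def)
    then have "(v - E2 v) + (E2 v - E1 (E2 v)) \<in> span (G1 \<union> G2)" by (rule span_add)
    then show ?thesis by simp
  qed
  moreover have "E1 (E2 w) = 0" if "w \<in> G1 \<union> G2" for w
  proof (cases "w \<in> G1")
    case True
    then show ?thesis using E1 E2.zero comm[of w] by (simp add: coinv_projector_def)
  next
    case False
    then show ?thesis using that E2 E1.zero by (simp add: coinv_projector_def)
  qed
  moreover have "g - (g \<circ> (E1 \<circ> E2)) \<in> D.span (GD1 \<union> GD2)" if g: "g \<in> dual_space scale" for g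
  proof -
    have "g \<circ> E1 \<in> dual_space scale"
      using g module_hom_compose[OF E1.module_hom_axioms] by (simp add: dual_space_def)
    then have "g - (g \<circ> E1) \<in> D.span (GD1 \<union> GD2)"
      "(g \<circ> E1) - (g \<circ> E1 \<circ> E2) \<in> D.span (GD1 \<union> GD2)"
      using g E1 E2 D.span_mono[of GD1 "GD1 \<union> GD2"] D.span_mono[of GD2 "GD1 \<union> GD2"]
      by (auto simp: coinv_projector_def)
    then have "(g - (g \<circ> E1)) + ((g \<circ> E1) - (g \<circ> E1 \<circ> E2)) \<in> D.span (GD1 \<union> GD2)"
      by (rule D.span_add)
    then show ?thesis by (simp add: comp_assoc)
  qed
  moreover have "w (E1 (E2 v)) = 0" if "w \<in> GD1 \<union> GD2" for w v
  proof (cases "w \<in> GD1")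
    case True
    then show ?thesis using E1 by (simp add: coinv_projector_def)
  next
    case False
    then show ?thesis using that E2 comm[of v] by (simp add: coinv_projector_def)
  qed
  ultimately show ?thesis
    using module_hom_compose[OF E2.module_hom_axioms E1.module_hom_axioms]
    by (simp add: coinv_projector_def)
qed

lemma coinv_projector_annihilator_span_eq_0:
  assumes E: "coinv_projector scale E G GD" and x: "x \<in> dual_space scale"
    and x_G: "\<forall>w\<in>span G. x w = 0" and x_GD: "x \<in> D.span GD"
  shows "x = 0"
proof
  fix v
  interpret X: module_hom scale "(*)" x using x by (simp add: dual_space_def)
  have "D.subspace {w. \<forall>v. w (E v) = 0}"
    unfolding D.subspace_def by (auto simp: dscale_def)
  then have "D.span GD \<subseteq> {w. \<forall>v. w (E v) = 0}"
    using E by (intro D.span_minimal) (auto simp: coinv_projector_def)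
  then have "x (E v) = 0" using x_GD by blast
  moreover have "x (v - E v) = 0" using E x_G by (simp add: coinv_projector_def)
  ultimately show "x v = 0 v" by (simp add: X.diff)
qed

lemma coinv_projector_comp_annihilates:
  assumes E: "coinv_projector scale E G GD" and y: "y \<in> dual_space scale"
  shows "y \<circ> E \<in> dual_space scale" "\<forall>w\<in>span G. (y \<circ> E) w = 0"
proof -
  have hom: "module_hom scale (*) (y \<circ> E)"
    using E y by (intro module_hom_compose) (auto simp: coinv_projector_def dual_space_def)
  then show "y \<circ> E \<in> dual_space scale" by (simp add: dual_space_def)
  have "(y \<circ> E) w = 0" if "w \<in> G" for w
    using E y module_hom.zero[of scale "(*)" y] that by (simp add: coinv_projector_def dual_space_def)
  then show "\<forall>w\<in>span G. (y \<circ> E) w = 0"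
    using module_hom.eq_0_on_span[OF hom] by blast
qed

lemma quot_iso_annihilator:
  assumes E: "coinv_projector scale E G GD"
    and act: "\<And>g x. g \<in> H \<Longrightarrow> act1 g x = act2 g x"
  shows "quot_iso dscale act1 {x \<in> dual_space scale. \<forall>w\<in>span G. x w = 0} {0}
           dscale act2 (dual_space scale) (D.span GD) H"
  unfolding quot_iso_def
proof (intro exI[of _ id] conjI ballI allI)
  fix x assume x: "x \<in> {x \<in> dual_space scale. \<forall>w\<in>span G. x w = 0}"
  then show "id x \<in> dual_space scale" by simp
  show "x \<in> {0} \<longleftrightarrow> id x \<in> D.span GD"
    using x coinv_projector_annihilator_span_eq_0[OF E] D.span_zero by auto
  fix g assume "g \<in> H"
  then show "id (act1 g x) - act2 g (id x) \<in> D.span GD" using act D.span_zero by simp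
next
  fix y assume y: "y \<in> dual_space scale"
  have "g - (g \<circ> E) \<in> D.span GD" if "g \<in> dual_space scale" for g
    using E that by (simp add: coinv_projector_def)
  then show "\<exists>x\<in>{x \<in> dual_space scale. \<forall>w\<in>span G. x w = 0}. y - id x \<in> D.span GD"
    using coinv_projector_comp_annihilates[OF E y] y by (intro bexI[of _ "y \<circ> E"]) auto
qed (simp_all add: D.span_zero)

lemma span_span_Un: "span (span X \<union> Y) = span (X \<union> Y)"
proof -
  have "span X \<union> Y \<subseteq> span (X \<union> Y)"
    using span_mono[of X "X \<union> Y"] span_superset[of "X \<union> Y"] by blast
  moreover have "X \<union> Y \<subseteq> span (span X \<union> Y)"
    using span_superset[of X] span_superset[of "span X \<union> Y"] by blast
  ultimately show ?thesis unfolding span_eq ..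
qed

lemma phiW_eq_span: "phiW scale A V n \<chi> j = span (\<Union>i<j. rels scale A V n (n - i) \<chi>)"
proof (induct j)
  case (Suc j)
  have "(\<Union>i<Suc j. rels scale A V n (n - i) \<chi>) =
      (\<Union>i<j. rels scale A V n (n - i) \<chi>) \<union> rels scale A V n (n - j) \<chi>"
    by (auto simp: lessThan_Suc)
  then show ?case using Suc by (simp add: span_span_Un)
qed simp

lemma derivW_eq_span:
  "derivW scale A V n k \<chi> =
     span (rels scale A V n (n - k + 1) (\<lambda>_. 1) \<union> (\<Union>i<k - 1. rels scale A V n (n - i) \<chi>))"
proof -
  have "relsT A V n (n - k + 1) = rels scale A V n (n - k + 1) (\<lambda>_. 1)"
    unfolding relsT_def rels_def by simp
  then show ?thesis unfolding derivW_def phiW_eq_span span_span_Un by (simp add: Un_commute)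
qed

end

section \<open>Averaging over U_m\<close>

locale Umat_averaging =
  fixes s :: "'r::comm_ring_1 \<Rightarrow> 'v::ab_group_add \<Rightarrow> 'v"
    and act :: "'f::{field,finite} mat \<Rightarrow> 'v \<Rightarrow> 'v"
    and n :: nat and q_inv :: 'r
  assumes rep: "is_rep n s act"
    and q_inv: "q_inv * of_nat (card (UNIV :: 'f set)) = 1"
begin

sublocale M: Modules.module s
  using rep by (simp add: is_rep_def)

interpretation D: Modules.module "dscale :: 'r \<Rightarrow> ('v \<Rightarrow> 'r) \<Rightarrow> ('v \<Rightarrow> 'r)"
  by (rule module_dscale)

lemma module_hom_act: "g \<in> GL n \<Longrightarrow> module_hom s s (act g)"
  using rep by (simp add: is_rep_def module_hom_iff M.module_axioms)

lemma act_act: "g \<in> GL n \<Longrightarrow> h \<in> GL n \<Longrightarrow> act g (act h v) = act (g * h) v"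
  using rep by (simp add: is_rep_def)

lemma act_Umat_elem_Umat_elem:
  "1 \<le> m \<Longrightarrow> m \<le> n \<Longrightarrow>
    act (Umat_elem n m a) (act (Umat_elem n m b) v) = act (Umat_elem n m (\<lambda>i. a i + b i)) v"
  by (simp add: act_act Umat_elem_GL Umat_elem_mult)

text \<open>|U_m|^-1 times the sum of xi(u)^-1 u v over u in U_m, where xi(u) is xi of the entry
  (m - 2, m - 1) of u: the projection onto the vectors on which U_m acts through xi.\<close>
definition avg :: "('f \<Rightarrow> 'r) \<Rightarrow> nat \<Rightarrow> 'v \<Rightarrow> 'v" where
  "avg \<xi> m v = s (q_inv ^ (m - 1)) (\<Sum>a\<in>Umat_coords m. s (\<xi> (- a (m - 2))) (act (Umat_elem n m a) v))"

lemma q_inv_pow_card_Umat_coords: "q_inv ^ (m - 1) * of_nat (card (Umat_coords m :: (nat \<Rightarrow> 'f) set)) = 1"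
  by (simp add: card_Umat_coords power_mult_distrib[symmetric] q_inv)

lemma module_hom_avg:
  assumes "1 \<le> m" "m \<le> n"
  shows "module_hom s s (avg \<xi> m)"
proof -
  interpret module_pair s s by unfold_locales
  show ?thesis
    unfolding avg_def[abs_def] using assms
    by (intro module_hom_scale module_hom_sum module_hom_act Umat_elem_GL) (auto simp: M.module_axioms)
qed

lemma act_avg:
  assumes "1 \<le> m" "m \<le> n"
  shows "act (Umat_elem n m b) (avg \<xi> m v) = avg \<xi> m (act (Umat_elem n m b) v)"
proof -
  interpret H: module_hom s s "act (Umat_elem n m b)" using assms by (intro module_hom_act Umat_elem_GL)
  show ?thesis
    unfolding avg_def using assms by (simp add: H.scale H.sum act_Umat_elem_Umat_elem add.commute)
qed

text \<open>Right translation by U_m reindexes the sum.\<close>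
lemma avg_act:
  assumes adm: "admissible_level n m \<xi>"
  shows "avg \<xi> m (act (Umat_elem n m b) v) = s (\<xi> (b (m - 2))) (avg \<xi> m v)"
proof -
  note m = admissible_levelD(2,3)[OF adm] and \<xi> = admissible_levelD(1)[OF adm]
  define \<tau> where "\<tau> = (\<lambda>a. restrict (\<lambda>i. a i + b i) {..<m - 1})"
  define h where "h = (\<lambda>a. s (\<xi> (- a (m - 2))) (act (Umat_elem n m a) v))"
  have "(\<Sum>a\<in>Umat_coords m. s (\<xi> (- a (m - 2))) (act (Umat_elem n m a) (act (Umat_elem n m b) v)))
      = (\<Sum>a\<in>Umat_coords m. s (\<xi> (b (m - 2))) (h (\<tau> a)))"
  proof (rule sum.cong[OF refl])
    fix a :: "nat \<Rightarrow> 'f"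
    have U: "Umat_elem n m (\<lambda>i. a i + b i) = Umat_elem n m (\<tau> a)"
      by (rule Umat_elem_cong) (simp add: \<tau>_def)
    have "\<xi> (- a (m - 2)) = \<xi> (b (m - 2)) * \<xi> (- \<tau> a (m - 2))"
    proof (cases "m = 1")
      case False
      then have "m - 2 < m - 1" using m by arith
      then have "- a (m - 2) = - \<tau> a (m - 2) + b (m - 2)" by (simp add: \<tau>_def)
      then show ?thesis using \<xi> unfolding additive_char_def by (metis mult.commute)
    qed (simp add: admissible_levelD(4)[OF adm])
    then show "s (\<xi> (- a (m - 2))) (act (Umat_elem n m a) (act (Umat_elem n m b) v)) =
        s (\<xi> (b (m - 2))) (h (\<tau> a))"
      unfolding h_def using m by (simp add: act_Umat_elem_Umat_elem U)
  qed
  also have "\<dots> = s (\<xi> (b (m - 2))) (\<Sum>a\<in>Umat_coords m. h (\<tau> a))" by (simp add: M.scale_sum_right)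
  also have "(\<Sum>a\<in>Umat_coords m. h (\<tau> a)) = (\<Sum>a\<in>Umat_coords m. h a)"
    unfolding \<tau>_def Umat_coords_def by (rule sum.reindex_bij_betw[OF bij_betw_PiE_translate])
  finally show ?thesis unfolding avg_def h_def by (simp add: mult.commute)
qed

lemma avg_act_lower:
  assumes m: "1 \<le> m'" "m' < m" "m \<le> n"
  shows "avg \<xi> m (act (Umat_elem n m' c) v) = act (Umat_elem n m' c) (avg \<xi> m v)"
proof -
  interpret H: module_hom s s "act (Umat_elem n m' c)" using m by (intro module_hom_act Umat_elem_GL) auto
  define \<tau> where
    "\<tau> = (\<lambda>a. restrict (\<lambda>i. a i + (if i \<in> {..<m' - 1} then c i * a (m' - 1) else 0)) {..<m - 1})"
  define h where "h = (\<lambda>a. s (\<xi> (- a (m - 2))) (act (Umat_elem n m a) (act (Umat_elem n m' c) v)))"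
  have "(\<Sum>a\<in>Umat_coords m. act (Umat_elem n m' c) (s (\<xi> (- a (m - 2))) (act (Umat_elem n m a) v))) =
      (\<Sum>a\<in>Umat_coords m. h (\<tau> a))"
  proof (rule sum.cong[OF refl])
    fix a :: "nat \<Rightarrow> 'f"
    have "Umat_elem n m (\<lambda>i. a i + (if i < m' - 1 then c i * a (m' - 1) else 0)) = Umat_elem n m (\<tau> a)"
      by (rule Umat_elem_cong) (simp add: \<tau>_def)
    then have "Umat_elem n m' c * Umat_elem n m a = Umat_elem n m (\<tau> a) * Umat_elem n m' c"
      by (simp add: Umat_elem_conj[OF m])
    moreover have "\<tau> a (m - 2) = a (m - 2)" using m unfolding \<tau>_def by auto
    ultimately show "act (Umat_elem n m' c) (s (\<xi> (- a (m - 2))) (act (Umat_elem n m a) v)) = h (\<tau> a)"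
      unfolding h_def H.scale using m by (simp add: act_act Umat_elem_GL)
  qed
  also have "\<dots> = (\<Sum>a\<in>Umat_coords m. h a)"
    unfolding \<tau>_def Umat_coords_def using m by (intro sum.reindex_bij_betw bij_betw_PiE_shear) auto
  finally show ?thesis unfolding avg_def h_def H.scale H.sum by simp
qed

lemma avg_commute:
  assumes "1 \<le> m'" "m' < m" "m \<le> n"
  shows "avg \<xi> m (avg \<xi>' m' v) = avg \<xi>' m' (avg \<xi> m v)"
proof -
  interpret H: module_hom s s "avg \<xi> m" using assms by (intro module_hom_avg) auto
  show ?thesis unfolding avg_def[of \<xi>' m'] H.scale H.sum by (simp add: avg_act_lower[OF assms])
qed

lemma avg_rels_eq_0:
  assumes adm: "admissible_level n m \<xi>" and w: "w \<in> rels s act UNIV n m \<xi>"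
  shows "avg \<xi> m w = 0"
proof -
  interpret H: module_hom s s "avg \<xi> m" using admissible_levelD(2,3)[OF adm] by (rule module_hom_avg)
  obtain u v where w: "w = act u v - s (\<xi> (u $$ (m - 2, m - 1))) v" and u: "u \<in> Umat n m"
    using w unfolding rels_def by blast
  have "avg \<xi> m (act u v) = s (\<xi> (u $$ (m - 2, m - 1))) (avg \<xi> m v)"
    using avg_act[OF adm] Umat_eq_Umat_elem[OF u] char_Umat_elem_entry[OF adm] by metis
  then show ?thesis unfolding w H.diff H.scale by simp
qed

lemma diff_avg_in_span_rels:
  assumes adm: "admissible_level n m \<xi>"
  shows "v - avg \<xi> m v \<in> M.span (rels s act UNIV n m \<xi>)"
proof -
  note \<xi> = admissible_levelD(1)[OF adm]
  define rel where "rel = (\<lambda>a. act (Umat_elem n m a) v - s (\<xi> (a (m - 2))) v)"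
  have rel: "rel a \<in> rels s act UNIV n m \<xi>" for a
  proof -
    have "rel a = act (Umat_elem n m a) v - s (\<xi> (Umat_elem n m a $$ (m - 2, m - 1))) v"
      unfolding rel_def by (simp only: char_Umat_elem_entry[OF adm])
    then show ?thesis unfolding rels_def using Umat_elem_in_Umat by blast
  qed
  have "s (- \<xi> (- a (m - 2))) (rel a) = v - s (\<xi> (- a (m - 2))) (act (Umat_elem n m a) v)" for a
    unfolding rel_def
    by (simp add: M.scale_right_diff_distrib additive_char_neg_mult[OF \<xi>] M.scale_minus_left)
  then have "(\<Sum>a\<in>Umat_coords m. s (- \<xi> (- a (m - 2))) (rel a)) =
      s (of_nat (card (Umat_coords m :: (nat \<Rightarrow> 'f) set))) v -
      (\<Sum>a\<in>Umat_coords m. s (\<xi> (- a (m - 2))) (act (Umat_elem n m a) v))"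
    by (simp add: sum_subtractf M.sum_constant_scale)
  then have "v - avg \<xi> m v = s (q_inv ^ (m - 1)) (\<Sum>a\<in>Umat_coords m. s (- \<xi> (- a (m - 2))) (rel a))"
    unfolding avg_def by (simp add: M.scale_right_diff_distrib q_inv_pow_card_Umat_coords[simplified])
  also have "\<dots> \<in> M.span (rels s act UNIV n m \<xi>)"
    by (intro M.span_scale M.span_sum M.span_base rel)
  finally show ?thesis .
qed

lemma dual_rels_avg_eq_0:
  assumes adm: "admissible_level n m \<xi>"
    and w: "w \<in> rels dscale (dual_act n act) (dual_space s) n m (\<lambda>y. \<xi> (- y))"
  shows "w (avg \<xi> m v) = 0"
proof -
  note m = admissible_levelD(2,3)[OF adm]
  obtain u g where w: "w = dual_act n act u g - dscale (\<xi> (- u $$ (m - 2, m - 1))) g"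
    and u: "u \<in> Umat n m" and g: "g \<in> dual_space s"
    using w unfolding rels_def by blast
  interpret G: module_hom s "(*)" g using g by (simp add: dual_space_def)
  define b where "b = (\<lambda>i. u $$ (i, m - 1))"
  have u_eq: "u = Umat_elem n m b" unfolding b_def by (rule Umat_eq_Umat_elem[OF u])
  have "act (ginv n u) (avg \<xi> m v) = s (\<xi> (- b (m - 2))) (avg \<xi> m v)"
    unfolding u_eq ginv_Umat_elem[OF m] act_avg[OF m] avg_act[OF adm] by simp
  moreover have "\<xi> (- u $$ (m - 2, m - 1)) = \<xi> (- b (m - 2))"
    using char_Umat_elem_entry[OF admissible_level_neg[OF adm], of b] by (simp only: u_eq)
  ultimately show ?thesis unfolding w dual_act_def by (simp add: G.scale dscale_apply)
qed

lemma diff_comp_avg_in_span_dual_rels: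
  assumes adm: "admissible_level n m \<xi>" and g: "g \<in> dual_space s"
  shows "g - (g \<circ> avg \<xi> m) \<in> D.span (rels dscale (dual_act n act) (dual_space s) n m (\<lambda>y. \<xi> (- y)))"
proof -
  interpret G: module_hom s "(*)" g using g by (simp add: dual_space_def)
  note m = admissible_levelD(2,3)[OF adm] and \<xi> = admissible_levelD(1)[OF adm]
  define rel where "rel = (\<lambda>a. (g \<circ> act (Umat_elem n m a)) - dscale (\<xi> (a (m - 2))) g)"
  have rel: "rel a \<in> rels dscale (dual_act n act) (dual_space s) n m (\<lambda>y. \<xi> (- y))" for a
  proof -
    have "dual_act n act (Umat_elem n m (\<lambda>i. - a i)) g = g \<circ> act (Umat_elem n m a)"
      by (simp add: dual_act_def ginv_Umat_elem[OF m] comp_def)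
    moreover have "\<xi> (- Umat_elem n m (\<lambda>i. - a i) $$ (m - 2, m - 1)) = \<xi> (a (m - 2))"
      using char_Umat_elem_entry[OF admissible_level_neg[OF adm], of "\<lambda>i. - a i"] by simp
    ultimately have "rel a = dual_act n act (Umat_elem n m (\<lambda>i. - a i)) g -
        dscale (\<xi> (- Umat_elem n m (\<lambda>i. - a i) $$ (m - 2, m - 1))) g"
      unfolding rel_def by (simp only:)
    then show ?thesis unfolding rels_def using Umat_elem_in_Umat g by blast
  qed
  define c where "c = q_inv ^ (m - 1)"
  define N where "N = (of_nat (card (Umat_coords m :: (nat \<Rightarrow> 'f) set)) :: 'r)"
  define S where "S = (\<Sum>a\<in>Umat_coords m. dscale (\<xi> (- a (m - 2))) (g \<circ> act (Umat_elem n m a)))"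
  have "dscale (- \<xi> (- a (m - 2))) (rel a) =
      g - dscale (\<xi> (- a (m - 2))) (g \<circ> act (Umat_elem n m a))" for a
    by (simp add: fun_eq_iff rel_def right_diff_distrib additive_char_neg_mult[OF \<xi>] dscale_apply)
  then have "(\<Sum>a\<in>Umat_coords m. dscale (- \<xi> (- a (m - 2))) (rel a)) = dscale N g - S"
    unfolding N_def S_def by (simp add: sum_subtractf D.sum_constant_scale del: sum_constant)
  moreover have "dscale c (dscale N g) = g"
    unfolding c_def N_def by (simp add: D.scale_scale q_inv_pow_card_Umat_coords[simplified])
  moreover have "dscale c S = g \<circ> avg \<xi> m"
    unfolding c_def S_def by (simp add: fun_eq_iff avg_def G.scale G.sum sum_fun_apply dscale_apply)
  ultimately have "g - (g \<circ> avg \<xi> m) = dscale c (\<Sum>a\<in>Umat_coords m. dscale (- \<xi> (- a (m - 2))) (rel a))"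
    by (simp add: D.scale_right_diff_distrib)
  also have "\<dots> \<in> D.span (rels dscale (dual_act n act) (dual_space s) n m (\<lambda>y. \<xi> (- y)))"
    by (intro D.span_scale D.span_sum D.span_base rel)
  finally show ?thesis .
qed

lemma coinv_projector_avg:
  assumes "admissible_level n m \<xi>"
  shows "coinv_projector s (avg \<xi> m) (rels s act UNIV n m \<xi>)
           (rels dscale (dual_act n act) (dual_space s) n m (\<lambda>y. \<xi> (- y)))"
  using assms admissible_levelD(2,3)[OF assms]
  by (simp add: coinv_projector_def module_hom_avg avg_rels_eq_0 diff_avg_in_span_rels
      dual_rels_avg_eq_0 diff_comp_avg_in_span_dual_rels)

primrec avg_chain :: "('f \<Rightarrow> 'r) \<Rightarrow> nat \<Rightarrow> 'v \<Rightarrow> 'v" where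
  "avg_chain \<xi> 0 = id"
| "avg_chain \<xi> (Suc j) = avg \<xi> (n - j) \<circ> avg_chain \<xi> j"

lemma avg_avg_chain_commute:
  assumes "1 \<le> m" "m + j \<le> n"
  shows "avg \<xi>' m (avg_chain \<xi> j v) = avg_chain \<xi> j (avg \<xi>' m v)"
  using assms
proof (induction j arbitrary: v)
  case (Suc j)
  then have "avg \<xi>' m (avg \<xi> (n - j) v) = avg \<xi> (n - j) (avg \<xi>' m v)" for v
    by (intro avg_commute[symmetric]) auto
  then show ?case using Suc by simp
qed simp

lemma coinv_projector_avg_chain:
  assumes "additive_char \<xi>" "j < n"
  shows "coinv_projector s (avg_chain \<xi> j) (\<Union>i<j. rels s act UNIV n (n - i) \<xi>)
           (\<Union>i<j. rels dscale (dual_act n act) (dual_space s) n (n - i) (\<lambda>y. \<xi> (- y)))"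
  using assms(2)
proof (induction j)
  case 0
  show ?case using M.coinv_projector_id by (simp add: id_def)
next
  case (Suc j)
  have "admissible_level n (n - j) \<xi>"
    unfolding admissible_level_def using assms(1) Suc.prems by auto
  then have "coinv_projector s (avg \<xi> (n - j) \<circ> avg_chain \<xi> j)
      (rels s act UNIV n (n - j) \<xi> \<union> (\<Union>i<j. rels s act UNIV n (n - i) \<xi>))
      (rels dscale (dual_act n act) (dual_space s) n (n - j) (\<lambda>y. \<xi> (- y)) \<union>
        (\<Union>i<j. rels dscale (dual_act n act) (dual_space s) n (n - i) (\<lambda>y. \<xi> (- y))))"
    using Suc by (intro M.coinv_projector_comp coinv_projector_avg avg_avg_chain_commute) auto
  then show ?case by (simp only: avg_chain.simps lessThan_Suc UN_insert)
qed

theorem quot_iso_dual_derivative: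
  assumes \<xi>: "additive_char \<xi>" and k: "1 \<le> k" "k \<le> n"
  shows "quot_iso dscale (deriv_dual_act n k act) (deriv_dual_space s act n k \<xi>) {0}
     dscale (\<lambda>g. dual_act n act (emb n g)) (dual_space s)
       (derivW dscale (dual_act n act) (dual_space s) n k (\<lambda>y. \<xi> (- y))) (GL (n - k))"
proof -
  interpret D: Modules.module "dscale :: 'r \<Rightarrow> ('v \<Rightarrow> 'r) \<Rightarrow> ('v \<Rightarrow> 'r)"
    by (rule module_dscale)
  have "admissible_level n (n - k + 1) (\<lambda>_. 1 :: 'r)"
    using k by (simp add: admissible_level_def additive_char_def)
  then have "coinv_projector s (avg (\<lambda>_. 1) (n - k + 1) \<circ> avg_chain \<xi> (k - 1))
      (rels s act UNIV n (n - k + 1) (\<lambda>_. 1) \<union> (\<Union>i<k - 1. rels s act UNIV n (n - i) \<xi>))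
      (rels dscale (dual_act n act) (dual_space s) n (n - k + 1) (\<lambda>_. 1) \<union>
        (\<Union>i<k - 1. rels dscale (dual_act n act) (dual_space s) n (n - i) (\<lambda>y. \<xi> (- y))))"
    using \<xi> k by (intro M.coinv_projector_comp coinv_projector_avg_chain coinv_projector_avg
        avg_avg_chain_commute) auto
  moreover have "deriv_dual_act n k act g x = dual_act n act (emb n g) x" if "g \<in> GL (n - k)" for g x
    using that by (simp add: deriv_dual_act_def dual_act_def ginv_emb)
  ultimately show ?thesis
    unfolding deriv_dual_space_def M.derivW_eq_span D.derivW_eq_span by (rule M.quot_iso_annihilator)
qed

end

lemma zero_in_Zpz: "0 \<in> Zpz p"
  using Zpz.add[OF Zpz.one Zpz.neg[OF Zpz.one]] by simp

lemma Zpz_alg_hom_of_nat: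
  assumes "Zpz_alg_hom p \<phi>"
  shows "of_nat j \<in> Zpz p \<and> \<phi> (of_nat j) = of_nat j"
proof (induct j)
  case 0
  have "\<phi> 0 = \<phi> 0 + \<phi> 0"
    using assms zero_in_Zpz[of p] unfolding Zpz_alg_hom_def by (metis add_0)
  then show ?case using zero_in_Zpz by simp
next
  case (Suc j)
  then have j: "of_nat j \<in> Zpz p" "\<phi> (of_nat j) = of_nat j" by auto
  have "\<phi> (1 + of_nat j) = 1 + of_nat j"
    using assms j Zpz.one unfolding Zpz_alg_hom_def by simp
  then show ?case using Zpz.add[OF Zpz.one j(1)] by simp
qed

lemma Zpz_alg_hom_card_unit:
  fixes \<phi> :: "complex \<Rightarrow> 'r::comm_ring_1"
  assumes p: "prime p" "CHAR('f) = p" and \<phi>: "Zpz_alg_hom p \<phi>"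
  shows "\<exists>c. c * of_nat (card (UNIV :: 'f::{field,finite} set)) = (1 :: 'r)"
proof -
  have "(of_nat p :: complex) \<noteq> 0" using prime_gt_0_nat[OF p(1)] by simp
  then have "1 = \<phi> (1 / of_nat p * of_nat p)" using \<phi> by (simp add: Zpz_alg_hom_def)
  also have "\<dots> = \<phi> (1 / of_nat p) * \<phi> (of_nat p)"
    using \<phi> Zpz_alg_hom_of_nat[OF \<phi>, of p] Zpz.invp[of p] unfolding Zpz_alg_hom_def by blast
  finally have p_unit: "\<phi> (1 / of_nat p) * of_nat p = 1"
    using Zpz_alg_hom_of_nat[OF \<phi>, of p] by simp
  obtain d where "card (UNIV :: 'f set) = p ^ d"
    using card_finite_field_eq_CHAR_power p(2) by metis
  then have "\<phi> (1 / of_nat p) ^ d * of_nat (card (UNIV :: 'f set)) = 1"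
    by (simp add: power_mult_distrib[symmetric] p_unit)
  then show ?thesis by blast
qed

lemma additive_char_Zpz_alg_hom_comp:
  assumes \<phi>: "Zpz_alg_hom p \<phi>" and \<psi>: "nontriv_add_char p \<psi>"
  shows "additive_char (\<lambda>y. \<phi> (\<psi> y))"
proof -
  have \<psi>_Zpz: "\<psi> x \<in> Zpz p" and \<psi>_add: "\<psi> (x + y) = \<psi> x * \<psi> y" for x y
    using \<psi> by (auto simp: nontriv_add_char_def)
  obtain y where "\<psi> 0 * y = 1" using \<psi> unfolding nontriv_add_char_def by blast
  then have "\<psi> 0 * \<psi> 0 = \<psi> 0" and "\<psi> 0 \<noteq> 0"
    using \<psi>_add[of 0 0] by auto
  then have "\<psi> 0 = 1" by simp
  then show ?thesis
    using \<phi> \<psi>_Zpz \<psi>_add by (simp add: additive_char_def Zpz_alg_hom_def)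
qed

theorem corollary2p6:
  fixes p :: nat
    and \<psi> :: "'f::{field,finite} \<Rightarrow> complex"
    and \<phi> :: "complex \<Rightarrow> 'r::comm_ring_1"
    and s :: "'r \<Rightarrow> 'v::ab_group_add \<Rightarrow> 'v"
    and act :: "'f mat \<Rightarrow> 'v \<Rightarrow> 'v"
    and n k :: nat
  assumes "prime p" and "CHAR('f) = p"
    and "noetherian_ring TYPE('r)"
    and "Zpz_alg_hom p \<phi>"
    and "nontriv_add_char p \<psi>"
    and "is_rep n s act"
    and "1 \<le> k" and "k \<le> n"
  shows "quot_iso
     dscale (deriv_dual_act n k act) (deriv_dual_space s act n k (\<lambda>y. \<phi> (\<psi> y))) {0}
     dscale (\<lambda>g. dual_act n act (emb n g)) (dual_space s)
       (derivW dscale (dual_act n act) (dual_space s) n k (\<lambda>y. \<phi> (\<psi> (- y))))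
     (GL (n - k))"
proof -
  obtain q_inv where "q_inv * of_nat (card (UNIV :: 'f set)) = (1 :: 'r)"
    using Zpz_alg_hom_card_unit[OF assms(1,2,4)] by blast
  then interpret Umat_averaging s act n q_inv
    using assms(6) by unfold_locales
  show ?thesis
    using additive_char_Zpz_alg_hom_comp[OF assms(4,5)] assms(7,8) by (rule quot_iso_dual_derivative)
qed

end
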